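(* Fix $c\ge0$ and consider $\partial_t u=\partial_{xx}u-c\partial_x u$ ($x>0$), $\partial_x u=g(u)$ ($x=0$), where $g$ satisfies: there is $y_1>0$ with $g(0)=g(y_1)=0$ and $g(y)<0$ for $y\in(0,y_1)$. Then for all sufficiently large $k$ there exist $T_k>0$ and a function $\overline u_k\in C([0,T_k],BUC([0,\infty)))$ such that: (1) $\overline u_k(\cdot,0)=1/k^2$; (2) $\overline u_k$ is a super-solution of the problem for $t\in(0,T_k]$; (3) $\overline u_k(0,T_k)=1/k$; (4) $T_k\to\infty$ as $k\to\infty$.
   Context: $g\in C^2(\mathbb{R},\mathbb{R})$ is $2\pi$-periodic. A super-solution on a time interval $(s,T)$ is a function $\overline u(x,t)$, continuous for $s\le t\le T$, satisfying classically $\partial_t\overline u\ge\partial_{xx}\overline u-c\partial_x\overline u$ for $x>0$, $t\in(s,T)$, and $\partial_x\overline u\le g(\overline u)$ at $x=0$, $t\in(s,T)$. *)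

theory Defs
  imports "HOL-Analysis.Analysis"
begin

text \<open>Functions u :: real => real => real are written u x t (space x, time t).\<close>

definition C2_fun :: "(real \<Rightarrow> real) \<Rightarrow> bool" where
  "C2_fun g \<longleftrightarrow> (\<forall>y. g differentiable (at y)) \<and> (\<forall>y. deriv g differentiable (at y))
     \<and> continuous_on UNIV (deriv (deriv g))"

definition super_solution ::
  "real \<Rightarrow> (real \<Rightarrow> real) \<Rightarrow> (real \<Rightarrow> real \<Rightarrow> real) \<Rightarrow> real \<Rightarrow> real \<Rightarrow> bool" where
  "super_solution c g u s T \<longleftrightarrow>
     continuous_on ({0..} \<times> {s..T}) (\<lambda>(x,t). u x t) \<and>
     (\<forall>t\<in>{s<..<T}. \<forall>x>0.
        (\<forall>y>0. (\<lambda>z. u z t) differentiable (at y)) \<and>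
        deriv (\<lambda>z. u z t) differentiable (at x) \<and>
        (\<lambda>\<tau>. u x \<tau>) differentiable (at t) \<and>
        deriv (\<lambda>\<tau>. u x \<tau>) t \<ge>
          deriv (deriv (\<lambda>z. u z t)) x - c * deriv (\<lambda>z. u z t) x) \<and>
     (\<forall>t\<in>{s<..<T}. \<exists>d. ((\<lambda>z. u z t) has_real_derivative d) (at 0 within {0..})
        \<and> d \<le> g (u 0 t))"

definition in_C_BUC :: "real \<Rightarrow> (real \<Rightarrow> real \<Rightarrow> real) \<Rightarrow> bool" where
  "in_C_BUC T u \<longleftrightarrow>
     (\<forall>t\<in>{0..T}. bounded ((\<lambda>x. u x t) ` {0..}) \<and> uniformly_continuous_on {0..} (\<lambda>x. u x t)) \<and>
     (\<forall>t0\<in>{0..T}. \<forall>\<epsilon>>0. \<exists>\<delta>>0. \<forall>t\<in>{0..T}. \<bar>t - t0\<bar> < \<delta> \<longrightarrow>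
        (\<forall>x\<ge>0. \<bar>u x t - u x t0\<bar> \<le> \<epsilon>))"

end

theory Submission
  imports Defs "HOL-Real_Asymp.Real_Asymp"
begin

text \<open>The super-solutions are explicit barriers
  \<open>\<epsilon> e\<^sup>\<mu>\<^sup>t (1 + m (sqrt (x\<^sup>2 + s(t)) - x))\<close> with \<open>s(t) = \<sigma> t / (t + \<tau>)\<close>, which equal \<open>\<epsilon>\<close> at
  \<open>t = 0\<close>. Since \<open>g\<close> is \<open>C\<^sup>1\<close> with \<open>g 0 = 0\<close>, \<open>g y \<ge> - L y\<close> on \<open>[0,1]\<close>, and with \<open>m = 2 L\<close> the
  boundary slope \<open>-m \<epsilon> e\<^sup>\<mu>\<^sup>t\<close> stays below \<open>g(u)\<close> as long as \<open>u \<le> 1\<close>. In the interior the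
  diffusion and drift terms are of size \<open>(m + c) / sqrt (x\<^sup>2 + s)\<close>; they are absorbed by the
  growth rate \<open>\<mu>\<close> once \<open>s(t)\<close> is of order \<open>\<sigma>\<close>, and by the growth of \<open>s\<close> itself for small \<open>t\<close>.
  With \<open>\<epsilon> = 1/k\<^sup>2\<close>, \<open>T\<^sub>k\<close> is the time at which the barrier reaches \<open>1/k\<close> at \<open>x = 0\<close>; since
  it is at most \<open>2 \<epsilon> e\<^sup>\<mu>\<^sup>t\<close> there, \<open>T\<^sub>k \<ge> ln (k/2) / \<mu> \<rightarrow> \<infinity>\<close>.\<close>

lemma C2_fun_lower_linear_bound:
  assumes "C2_fun g" "g 0 = 0"
  obtains L :: real where "L \<ge> 1" "\<And>y. y \<in> {0..1} \<Longrightarrow> - L * y \<le> g y"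
proof -
  have g': "\<And>y. (g has_real_derivative deriv g y) (at y)"
    using assms(1) unfolding C2_fun_def by (simp add: DERIV_deriv_iff_real_differentiable)
  have "continuous_on {0..1} (deriv g)"
    using assms(1) unfolding C2_fun_def
    by (meson continuous_at_imp_continuous_on differentiable_imp_continuous_within)
  then have "bounded (deriv g ` {0..1})"
    by (intro compact_imp_bounded compact_continuous_image) auto
  then obtain B where B: "\<And>y. y \<in> {0..1} \<Longrightarrow> \<bar>deriv g y\<bar> \<le> B"
    unfolding bounded_iff by (metis atLeastAtMost_iff image_eqI real_norm_def)
  have "- max 1 B * y \<le> g y" if y: "y \<in> {0..1}" for y
  proof (cases "y = 0")
    case True
    then show ?thesis using assms(2) by simp
  next
    case False
    then have "0 < y" using y by simp
    then obtain z where z: "0 < z" "z < y" "g y - g 0 = (y - 0) * deriv g z"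
      using MVT2[OF _ g'] by blast
    have "- max 1 B \<le> deriv g z" using B[of z] z y by auto
    then have "y * (- max 1 B) \<le> y * deriv g z" using \<open>0 < y\<close> by (intro mult_left_mono) auto
    then show ?thesis using z assms(2) by (simp add: mult.commute)
  qed
  then show ?thesis using that[of "max 1 B"] by simp
qed

lemma super_solutionI:
  fixes u u_x u_xx u_t :: "real \<Rightarrow> real \<Rightarrow> real"
  assumes "continuous_on ({0..} \<times> {s..T}) (\<lambda>(x, t). u x t)"
    and u_x: "\<And>x t. t \<in> {s<..<T} \<Longrightarrow> x > 0 \<Longrightarrow> ((\<lambda>z. u z t) has_real_derivative u_x x t) (at x)"
    and u_xx: "\<And>x t. t \<in> {s<..<T} \<Longrightarrow> x > 0 \<Longrightarrow> ((\<lambda>z. u_x z t) has_real_derivative u_xx x t) (at x)"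
    and u_t: "\<And>x t. t \<in> {s<..<T} \<Longrightarrow> x > 0 \<Longrightarrow> ((\<lambda>\<tau>. u x \<tau>) has_real_derivative u_t x t) (at t)"
    and "\<And>x t. t \<in> {s<..<T} \<Longrightarrow> x > 0 \<Longrightarrow> u_xx x t - c * u_x x t \<le> u_t x t"
    and "\<And>t. t \<in> {s<..<T} \<Longrightarrow> ((\<lambda>z. u z t) has_real_derivative u_x 0 t) (at 0 within {0..})"
    and "\<And>t. t \<in> {s<..<T} \<Longrightarrow> u_x 0 t \<le> g (u 0 t)"
  shows "super_solution c g u s T"
  unfolding super_solution_def
proof (intro conjI ballI allI impI)
  fix t x :: real assume t: "t \<in> {s<..<T}" and "x > 0"
  have deriv_x: "deriv (\<lambda>z. u z t) z = u_x z t" if "z > 0" for z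
    using u_x[OF t that] by (rule DERIV_imp_deriv)
  have "(deriv (\<lambda>z. u z t) has_real_derivative u_xx x t) (at x)"
    by (rule has_field_derivative_transform_within_open[OF u_xx[OF t \<open>x > 0\<close>], of "{0<..}"])
       (use \<open>x > 0\<close> deriv_x in auto)
  then show "deriv (\<lambda>z. u z t) differentiable (at x)"
    and "deriv (deriv (\<lambda>z. u z t)) x - c * deriv (\<lambda>z. u z t) x \<le> deriv (\<lambda>\<tau>. u x \<tau>) t"
    using assms(5)[OF t \<open>x > 0\<close>] deriv_x[OF \<open>x > 0\<close>] DERIV_imp_deriv[OF u_t[OF t \<open>x > 0\<close>]]
    by (auto simp: real_differentiable_def DERIV_imp_deriv)
  show "(\<lambda>\<tau>. u x \<tau>) differentiable (at t)"
    using u_t[OF t \<open>x > 0\<close>] by (auto simp: real_differentiable_def)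
next
  fix t y :: real assume "t \<in> {s<..<T}" "y > 0"
  then show "(\<lambda>z. u z t) differentiable (at y)"
    using u_x by (auto simp: real_differentiable_def)
next
  fix t :: real assume "t \<in> {s<..<T}"
  then show "\<exists>d. ((\<lambda>z. u z t) has_real_derivative d) (at 0 within {0..}) \<and> d \<le> g (u 0 t)"
    using assms(6,7) by blast
qed (use assms(1) in auto)

lemma in_C_BUCI:
  assumes "\<And>t. t \<in> {0..T} \<Longrightarrow> bounded ((\<lambda>x. u x t) ` {0..})"
    and "\<And>t. t \<in> {0..T} \<Longrightarrow> uniformly_continuous_on {0..} (\<lambda>x. u x t)"
    and modulus: "\<And>t0 t x. t0 \<in> {0..T} \<Longrightarrow> t \<in> {0..T} \<Longrightarrow> x \<ge> 0 \<Longrightarrow> \<bar>u x t - u x t0\<bar> \<le> F t0 t"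
    and F_tendsto: "\<And>t0. t0 \<in> {0..T} \<Longrightarrow> (F t0 \<longlongrightarrow> 0) (at t0)"
  shows "in_C_BUC T u"
  unfolding in_C_BUC_def
proof (intro conjI ballI allI impI)
  fix t0 e :: real assume t0: "t0 \<in> {0..T}" and "e > 0"
  then obtain d where "d > 0" and d: "\<And>t. t \<noteq> t0 \<Longrightarrow> \<bar>t - t0\<bar> < d \<Longrightarrow> \<bar>F t0 t\<bar> < e"
    using F_tendsto[OF t0] unfolding LIM_eq by force
  have "\<bar>u x t - u x t0\<bar> \<le> e" if "t \<in> {0..T}" "\<bar>t - t0\<bar> < d" "x \<ge> 0" for t x
    using modulus[OF t0 that(1,3)] d[OF _ that(2)] \<open>e > 0\<close> by (cases "t = t0") auto
  with \<open>d > 0\<close> show "\<exists>\<delta>>0. \<forall>t\<in>{0..T}. \<bar>t - t0\<bar> < \<delta> \<longrightarrow> (\<forall>x\<ge>0. \<bar>u x t - u x t0\<bar> \<le> e)"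
    by blast
qed (use assms in auto)

lemma sqrt_add_square_minus_bounds:
  fixes x s :: real
  assumes "x \<ge> 0" "s \<ge> 0"
  shows "0 \<le> sqrt (x\<^sup>2 + s) - x" "sqrt (x\<^sup>2 + s) - x \<le> sqrt s"
proof -
  show "0 \<le> sqrt (x\<^sup>2 + s) - x"
    using assms real_sqrt_le_mono[of "x\<^sup>2" "x\<^sup>2 + s"] by simp
  have "sqrt (x\<^sup>2 + s) \<le> sqrt (x\<^sup>2) + sqrt s"
    using assms by (intro sqrt_add_le_add_sqrt) auto
  then show "sqrt (x\<^sup>2 + s) - x \<le> sqrt s" using assms by simp
qed

definition profile :: "real \<Rightarrow> real \<Rightarrow> real \<Rightarrow> real" where
  "profile m s x = 1 + m * (sqrt (x\<^sup>2 + s) - x)"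

lemma profile_bounds:
  assumes "m \<ge> 0" "s \<ge> 0" "x \<ge> 0"
  shows "1 \<le> profile m s x" "profile m s x \<le> 1 + m * sqrt s"
  using sqrt_add_square_minus_bounds[OF assms(3,2)] assms(1)
  by (auto simp: profile_def intro: mult_left_mono)

lemma profile_at_0: "s \<ge> 0 \<Longrightarrow> profile m s 0 = 1 + m * sqrt s"
  by (simp add: profile_def)

text \<open>Both Lipschitz bounds come from the triangle inequality for the Euclidean norm of
  \<open>(x, sqrt s)\<close>, which equals \<open>sqrt (x\<^sup>2 + s)\<close>.\<close>

lemma profile_lipschitz_x:
  assumes "m \<ge> 0" "s \<ge> 0"
  shows "\<bar>profile m s x - profile m s y\<bar> \<le> 2 * m * \<bar>x - y\<bar>"
proof -
  have norm: "\<And>a. sqrt (a\<^sup>2 + s) = norm (a, sqrt s)" using assms by (simp add: norm_Pair)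
  have "\<bar>norm (x, sqrt s) - norm (y, sqrt s)\<bar> \<le> norm ((x, sqrt s) - (y, sqrt s))"
    by (rule norm_triangle_ineq3)
  then have "\<bar>sqrt (x\<^sup>2 + s) - sqrt (y\<^sup>2 + s)\<bar> \<le> \<bar>x - y\<bar>" by (simp add: norm norm_Pair)
  then have "\<bar>(sqrt (x\<^sup>2 + s) - sqrt (y\<^sup>2 + s)) - (x - y)\<bar> \<le> 2 * \<bar>x - y\<bar>"
    using abs_triangle_ineq4[of "sqrt (x\<^sup>2 + s) - sqrt (y\<^sup>2 + s)" "x - y"] by simp
  then have "\<bar>(sqrt (x\<^sup>2 + s) - x) - (sqrt (y\<^sup>2 + s) - y)\<bar> \<le> 2 * \<bar>x - y\<bar>"
    by (simp add: algebra_simps)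
  then have "m * \<bar>(sqrt (x\<^sup>2 + s) - x) - (sqrt (y\<^sup>2 + s) - y)\<bar> \<le> m * (2 * \<bar>x - y\<bar>)"
    using assms(1) by (rule mult_left_mono)
  moreover have "profile m s x - profile m s y = m * ((sqrt (x\<^sup>2 + s) - x) - (sqrt (y\<^sup>2 + s) - y))"
    by (simp add: profile_def algebra_simps)
  ultimately show ?thesis using assms(1) by (simp add: abs_mult)
qed

lemma profile_holder_s:
  assumes "m \<ge> 0" "s \<ge> 0" "s' \<ge> 0"
  shows "\<bar>profile m s x - profile m s' x\<bar> \<le> m * sqrt \<bar>s - s'\<bar>"
proof -
  have norm: "\<And>a. a \<ge> 0 \<Longrightarrow> sqrt (x\<^sup>2 + a) = norm (x, sqrt a)" by (simp add: norm_Pair)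
  have "\<bar>norm (x, sqrt s) - norm (x, sqrt s')\<bar> \<le> norm ((x, sqrt s) - (x, sqrt s'))"
    by (rule norm_triangle_ineq3)
  also have "\<dots> = \<bar>sqrt s - sqrt s'\<bar>" by (simp add: norm_Pair)
  also have "\<dots> \<le> sqrt \<bar>s - s'\<bar>"
    using assms(2,3) sqrt_add_le_add_sqrt[of s "s' - s"] sqrt_add_le_add_sqrt[of s' "s - s'"]
    by (cases "s \<le> s'") auto
  finally have "\<bar>sqrt (x\<^sup>2 + s) - sqrt (x\<^sup>2 + s')\<bar> \<le> sqrt \<bar>s - s'\<bar>"
    using assms(2,3) by (simp add: norm)
  then have "m * \<bar>sqrt (x\<^sup>2 + s) - sqrt (x\<^sup>2 + s')\<bar> \<le> m * sqrt \<bar>s - s'\<bar>"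
    using assms(1) by (rule mult_left_mono)
  moreover have "profile m s x - profile m s' x = m * (sqrt (x\<^sup>2 + s) - sqrt (x\<^sup>2 + s'))"
    by (simp add: profile_def algebra_simps)
  ultimately show ?thesis using assms(1) by (simp add: abs_mult)
qed

lemma profile_has_derivative_x:
  assumes "s > 0"
  shows "(profile m s has_real_derivative m * (x / sqrt (x\<^sup>2 + s) - 1)) (at x)"
proof -
  have "x\<^sup>2 + s > 0" using assms by (simp add: add_nonneg_pos)
  then show ?thesis unfolding profile_def
    by (auto intro!: derivative_eq_intros simp: field_simps)
qed

lemma profile_has_second_derivative_x:
  assumes "s > 0"
  shows "((\<lambda>x. m * (x / sqrt (x\<^sup>2 + s) - 1)) has_real_derivative m * (s / sqrt (x\<^sup>2 + s) ^ 3)) (at x)"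
proof -
  have pos: "x\<^sup>2 + s > 0" using assms by (simp add: add_nonneg_pos)
  then have "sqrt (x\<^sup>2 + s) > 0" by simp
  moreover have "\<And>r. r > 0 \<Longrightarrow> r\<^sup>2 = x\<^sup>2 + s \<Longrightarrow>
      (r - x * (inverse r * x)) * m / (x\<^sup>2 + s) = m * (s / r ^ 3)"
    by (simp add: field_simps power2_eq_square power3_eq_cube)
  ultimately show ?thesis using pos by (auto intro!: derivative_eq_intros)
qed

definition spread :: "real \<Rightarrow> real \<Rightarrow> real \<Rightarrow> real" where
  "spread \<sigma> \<tau> t = \<sigma> * t / (t + \<tau>)"

lemma spread_0 [simp]: "spread \<sigma> \<tau> 0 = 0"
  by (simp add: spread_def)

lemma spread_nonneg: "\<sigma> \<ge> 0 \<Longrightarrow> \<tau> > 0 \<Longrightarrow> t \<ge> 0 \<Longrightarrow> 0 \<le> spread \<sigma> \<tau> t"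
  by (simp add: spread_def)

lemma spread_pos: "\<sigma> > 0 \<Longrightarrow> \<tau> > 0 \<Longrightarrow> t > 0 \<Longrightarrow> 0 < spread \<sigma> \<tau> t"
  by (simp add: spread_def)

lemma spread_le: "\<sigma> \<ge> 0 \<Longrightarrow> \<tau> > 0 \<Longrightarrow> t \<ge> 0 \<Longrightarrow> spread \<sigma> \<tau> t \<le> \<sigma>"
  by (simp add: spread_def field_simps mult_left_mono)

lemma spread_mono:
  assumes "\<sigma> \<ge> 0" "\<tau> > 0" "0 \<le> t" "t \<le> t'"
  shows "spread \<sigma> \<tau> t \<le> spread \<sigma> \<tau> t'"
proof -
  have "\<sigma> * t * \<tau> \<le> \<sigma> * t' * \<tau>"
    using assms by (intro mult_right_mono mult_left_mono) auto
  then have "\<sigma> * t * (t' + \<tau>) \<le> \<sigma> * t' * (t + \<tau>)" by (simp add: algebra_simps)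
  then show ?thesis using assms by (simp add: spread_def divide_simps)
qed

definition barrier :: "real \<Rightarrow> real \<Rightarrow> real \<Rightarrow> real \<Rightarrow> real \<Rightarrow> real \<Rightarrow> real \<Rightarrow> real" where
  "barrier \<epsilon> \<mu> m \<sigma> \<tau> x t = \<epsilon> * exp (\<mu> * t) * profile m (spread \<sigma> \<tau> t) x"

lemma barrier_initial: "x \<ge> 0 \<Longrightarrow> barrier \<epsilon> \<mu> m \<sigma> \<tau> x 0 = \<epsilon>"
  by (simp add: barrier_def profile_def)

lemma barrier_has_derivative_t:
  assumes "t > 0" "\<tau> > 0" "\<sigma> > 0"
  shows "((\<lambda>t. barrier \<epsilon> \<mu> m \<sigma> \<tau> x t) has_real_derivative
     \<epsilon> * exp (\<mu> * t) * (\<mu> * profile m (spread \<sigma> \<tau> t) x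
       + m * (\<sigma> * \<tau> / (t + \<tau>)\<^sup>2) / (2 * sqrt (x\<^sup>2 + spread \<sigma> \<tau> t)))) (at t)"
proof -
  have "x\<^sup>2 + spread \<sigma> \<tau> t > 0" "t + \<tau> \<noteq> 0"
    using assms by (auto simp: spread_def add_nonneg_pos)
  then show ?thesis unfolding barrier_def profile_def spread_def
    by (auto intro!: derivative_eq_intros) (simp add: field_simps power2_eq_square)
qed

lemma barrier_continuous_on:
  assumes "\<tau> > 0"
  shows "continuous_on ({0..} \<times> {0..T}) (\<lambda>(x, t). barrier \<epsilon> \<mu> m \<sigma> \<tau> x t)"
proof -
  have "continuous_on ({0..} \<times> {0..T})
      (\<lambda>p. \<epsilon> * exp (\<mu> * snd p) * (1 + m * (sqrt ((fst p)\<^sup>2 + \<sigma> * snd p / (snd p + \<tau>)) - fst p)))"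
    using assms by (intro continuous_intros) (auto simp: add_pos_nonneg)
  then show ?thesis
    by (simp add: case_prod_beta' barrier_def profile_def spread_def)
qed

lemma barrier_time_modulus:
  assumes "\<epsilon> \<ge> 0" "m \<ge> 0" "\<sigma> \<ge> 0" "\<tau> > 0" "t \<ge> 0" "t0 \<ge> 0" "x \<ge> 0"
  shows "\<bar>barrier \<epsilon> \<mu> m \<sigma> \<tau> x t - barrier \<epsilon> \<mu> m \<sigma> \<tau> x t0\<bar>
    \<le> \<epsilon> * \<bar>exp (\<mu> * t) - exp (\<mu> * t0)\<bar> * (1 + m * sqrt \<sigma>)
       + \<epsilon> * exp (\<mu> * t0) * (m * sqrt \<bar>spread \<sigma> \<tau> t - spread \<sigma> \<tau> t0\<bar>)"
proof -
  define s s0 where "s = spread \<sigma> \<tau> t" and "s0 = spread \<sigma> \<tau> t0"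
  have s: "0 \<le> s" "s \<le> \<sigma>" and s0: "0 \<le> s0"
    using assms by (auto simp: s_def s0_def spread_nonneg spread_le)
  have "\<bar>profile m s x\<bar> \<le> 1 + m * sqrt \<sigma>"
    using profile_bounds[OF assms(2) s(1) assms(7)] s(2) assms(2)
    by (smt (verit, best) mult_left_mono real_sqrt_le_mono)
  then have "\<bar>\<epsilon> * (exp (\<mu> * t) - exp (\<mu> * t0)) * profile m s x\<bar>
      \<le> \<epsilon> * \<bar>exp (\<mu> * t) - exp (\<mu> * t0)\<bar> * (1 + m * sqrt \<sigma>)"
    using assms(1) by (simp add: abs_mult mult_left_mono)
  moreover have "\<bar>\<epsilon> * exp (\<mu> * t0) * (profile m s x - profile m s0 x)\<bar>
      \<le> \<epsilon> * exp (\<mu> * t0) * (m * sqrt \<bar>s - s0\<bar>)"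
    using profile_holder_s[OF assms(2) s(1) s0] assms(1) by (simp add: abs_mult mult_left_mono)
  moreover have "barrier \<epsilon> \<mu> m \<sigma> \<tau> x t - barrier \<epsilon> \<mu> m \<sigma> \<tau> x t0
      = \<epsilon> * (exp (\<mu> * t) - exp (\<mu> * t0)) * profile m s x
        + \<epsilon> * exp (\<mu> * t0) * (profile m s x - profile m s0 x)"
    by (simp add: barrier_def s_def s0_def algebra_simps)
  ultimately show ?thesis unfolding s_def s0_def by linarith
qed

lemma barrier_in_C_BUC:
  assumes "\<epsilon> \<ge> 0" "m \<ge> 0" "\<sigma> \<ge> 0" "\<tau> > 0"
  shows "in_C_BUC T (barrier \<epsilon> \<mu> m \<sigma> \<tau>)"
proof (rule in_C_BUCI)
  fix t assume t: "t \<in> {0..T}"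
  define A where "A = \<epsilon> * exp (\<mu> * t)"
  have A: "A \<ge> 0" using assms(1) by (simp add: A_def)
  have s: "0 \<le> spread \<sigma> \<tau> t" using assms t by (simp add: spread_nonneg)
  have "\<bar>barrier \<epsilon> \<mu> m \<sigma> \<tau> x t\<bar> \<le> A * (1 + m * sqrt (spread \<sigma> \<tau> t))" if "x \<ge> 0" for x
    using profile_bounds[OF assms(2) s that] abs_of_nonneg[OF A]
    by (simp add: barrier_def A_def abs_mult mult_left_mono)
  then show "bounded ((\<lambda>x. barrier \<epsilon> \<mu> m \<sigma> \<tau> x t) ` {0..})"
    unfolding bounded_iff by auto
  have "dist (barrier \<epsilon> \<mu> m \<sigma> \<tau> x t) (barrier \<epsilon> \<mu> m \<sigma> \<tau> y t)
      = A * \<bar>profile m (spread \<sigma> \<tau> t) x - profile m (spread \<sigma> \<tau> t) y\<bar>" for x y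
    using assms(1) by (simp add: barrier_def A_def dist_real_def abs_mult flip: right_diff_distrib)
  also have "\<dots> x y \<le> A * (2 * m * \<bar>x - y\<bar>)" for x y
    using A by (intro mult_left_mono profile_lipschitz_x assms(2) s) auto
  finally have "dist (barrier \<epsilon> \<mu> m \<sigma> \<tau> x t) (barrier \<epsilon> \<mu> m \<sigma> \<tau> y t) \<le> A * (2 * m) * dist x y" for x y
    by (simp add: dist_real_def mult.assoc)
  then have "(A * (2 * m))-lipschitz_on {0..} (\<lambda>x. barrier \<epsilon> \<mu> m \<sigma> \<tau> x t)"
    using A assms(2) by (intro lipschitz_onI) auto
  then show "uniformly_continuous_on {0..} (\<lambda>x. barrier \<epsilon> \<mu> m \<sigma> \<tau> x t)"
    by (rule lipschitz_on_uniformly_continuous)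
next
  fix t0 t x :: real assume "t0 \<in> {0..T}" "t \<in> {0..T}" "x \<ge> 0"
  then show "\<bar>barrier \<epsilon> \<mu> m \<sigma> \<tau> x t - barrier \<epsilon> \<mu> m \<sigma> \<tau> x t0\<bar>
    \<le> \<epsilon> * \<bar>exp (\<mu> * t) - exp (\<mu> * t0)\<bar> * (1 + m * sqrt \<sigma>)
       + \<epsilon> * exp (\<mu> * t0) * (m * sqrt \<bar>spread \<sigma> \<tau> t - spread \<sigma> \<tau> t0\<bar>)"
    using assms by (intro barrier_time_modulus) auto
next
  fix t0 :: real assume "t0 \<in> {0..T}"
  then have "(\<lambda>t. \<epsilon> * \<bar>exp (\<mu> * t) - exp (\<mu> * t0)\<bar> * (1 + m * sqrt \<sigma>)
       + \<epsilon> * exp (\<mu> * t0) * (m * sqrt \<bar>\<sigma> * t / (t + \<tau>) - \<sigma> * t0 / (t0 + \<tau>)\<bar>)) \<midarrow>t0\<rightarrow>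
      \<epsilon> * \<bar>exp (\<mu> * t0) - exp (\<mu> * t0)\<bar> * (1 + m * sqrt \<sigma>)
       + \<epsilon> * exp (\<mu> * t0) * (m * sqrt \<bar>\<sigma> * t0 / (t0 + \<tau>) - \<sigma> * t0 / (t0 + \<tau>)\<bar>)"
    using assms by (intro tendsto_intros) auto
  then show "((\<lambda>t. \<epsilon> * \<bar>exp (\<mu> * t) - exp (\<mu> * t0)\<bar> * (1 + m * sqrt \<sigma>)
       + \<epsilon> * exp (\<mu> * t0) * (m * sqrt \<bar>spread \<sigma> \<tau> t - spread \<sigma> \<tau> t0\<bar>)) \<longlongrightarrow> 0) (at t0)"
    by (simp add: spread_def)
qed

locale barrier_constants =
  fixes L c :: real
  assumes L_ge_1: "L \<ge> 1" and c_nonneg: "c \<ge> 0"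
begin

text \<open>The constants are tuned so that \<open>slope * sqrt width = 1\<close> (the drift term is then at most
  \<open>c / r\<close> with \<open>r = sqrt (x\<^sup>2 + s)\<close>), \<open>rate / (4 L) = 2 L + c\<close> (absorbing the interior terms
  once \<open>r \<ge> 1 / (4 L)\<close>), and
  \<open>delay = 1 / (4 rate)\<close> (the growth of the spread absorbs them for \<open>t \<le> delay\<close>).\<close>

definition slope where "slope = 2 * L"
definition width where "width = 1 / (4 * L\<^sup>2)"
definition rate where "rate = 8 * L\<^sup>2 + 4 * L * c"
definition delay where "delay = 1 / (4 * rate)"

lemma slope_pos: "slope > 0" and width_pos: "width > 0"
  and rate_pos: "rate > 0" and delay_pos: "delay > 0"
  using L_ge_1 c_nonneg by (auto simp: slope_def width_def rate_def delay_def add_pos_nonneg)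

lemma sqrt_width: "sqrt width = 1 / (2 * L)"
  using L_ge_1 by (simp add: width_def real_sqrt_divide real_sqrt_mult)

lemma slope_sqrt_width: "slope * sqrt width = 1"
  using L_ge_1 by (simp add: slope_def sqrt_width)

lemma rate_eq: "rate = 4 * L * (2 * L + c)"
  by (simp add: rate_def algebra_simps power2_eq_square)

lemma interior_balance:
  assumes "t > 0" "sqrt (spread width delay t) \<le> r"
  shows "2 * L + c \<le> rate * r + L * (width * delay / (t + delay)\<^sup>2)"
proof (cases "t \<le> delay")
  case True
  have "(t + delay)\<^sup>2 \<le> (2 * delay)\<^sup>2" using True assms(1) by (intro power_mono) auto
  then have "width * delay / (2 * delay)\<^sup>2 \<le> width * delay / (t + delay)\<^sup>2"
    using width_pos delay_pos assms(1) by (intro divide_left_mono) (auto intro!: mult_pos_pos)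
  moreover have "width * delay / (2 * delay)\<^sup>2 = width * rate"
    using rate_pos by (simp add: delay_def power2_eq_square)
  moreover have "L * (width * rate) = 2 * L + c"
    using L_ge_1 by (simp add: width_def rate_eq power2_eq_square)
  moreover have "0 \<le> sqrt (spread width delay t)"
    using assms(1) width_pos delay_pos by (simp add: spread_nonneg)
  then have "0 \<le> r" using assms(2) by linarith
  then have "0 \<le> rate * r" using rate_pos by simp
  ultimately show ?thesis using L_ge_1 by (smt (verit) mult_left_mono)
next
  case False
  have "width / 2 \<le> spread width delay t"
    unfolding spread_def using False width_pos delay_pos by (simp add: field_simps)
  moreover have "(1 / (4 * L))\<^sup>2 \<le> width / 2"
    using L_ge_1 by (simp add: width_def power2_eq_square field_simps)
  ultimately have "1 / (4 * L) \<le> r"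
    using L_ge_1 assms(2) by (metis order_trans real_le_rsqrt)
  then have "rate * (1 / (4 * L)) \<le> rate * r"
    using rate_pos by (intro mult_left_mono) auto
  moreover have "rate * (1 / (4 * L)) = 2 * L + c" using L_ge_1 by (simp add: rate_eq)
  moreover have "0 \<le> L * (width * delay / (t + delay)\<^sup>2)"
    using L_ge_1 width_pos delay_pos by simp
  ultimately show ?thesis by linarith
qed

lemma interior_inequality:
  assumes "t > 0" "x > 0"
  defines "s \<equiv> spread width delay t"
  shows "slope * (s / sqrt (x\<^sup>2 + s) ^ 3) - c * (slope * (x / sqrt (x\<^sup>2 + s) - 1))
    \<le> rate * profile slope s x + slope * (width * delay / (t + delay)\<^sup>2) / (2 * sqrt (x\<^sup>2 + s))"
proof -
  define r where "r = sqrt (x\<^sup>2 + s)"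
  define s' where "s' = width * delay / (t + delay)\<^sup>2"
  have s: "0 < s" "s \<le> width"
    using assms width_pos delay_pos by (auto simp: s_def spread_pos spread_le)
  then have r: "r > 0" "r\<^sup>2 = x\<^sup>2 + s" "sqrt s \<le> r"
    by (auto simp: r_def add_nonneg_pos)
  have diffusion: "slope * (s / r ^ 3) \<le> slope / r"
  proof -
    have "s / r ^ 3 \<le> r\<^sup>2 / r ^ 3" using r by (simp add: divide_right_mono)
    also have "\<dots> = 1 / r" using r(1) by (simp add: power2_eq_square power3_eq_cube)
    finally have "s / r ^ 3 \<le> 1 / r" .
    then show ?thesis using mult_left_mono[of _ _ slope] slope_pos by fastforce
  qed
  have drift: "- c * (slope * (x / r - 1)) \<le> c / r"
  proof -
    have "sqrt s \<le> sqrt width" using s(2) by simp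
    then have "r - x \<le> sqrt width"
      using sqrt_add_square_minus_bounds(2)[of x s] assms(2) s(1) unfolding r_def by linarith
    then have "c * slope * (r - x) \<le> c * (slope * sqrt width)"
      using c_nonneg slope_pos by (simp add: mult.assoc mult_left_mono)
    moreover have "- c * (slope * (x / r - 1)) = c * slope * (r - x) / r"
      using r by (simp add: field_simps)
    ultimately show ?thesis using r by (simp add: slope_sqrt_width divide_right_mono)
  qed
  have "2 * L + c \<le> rate * r + L * s'"
    using interior_balance[OF assms(1)] r(3) unfolding s'_def s_def by blast
  then have "(2 * L + c) / r \<le> (rate * r + L * s') / r"
    using r by (simp add: divide_right_mono)
  also have "\<dots> = rate + slope * s' / (2 * r)"
    using r by (simp add: slope_def field_simps)
  finally have "(2 * L + c) / r \<le> rate + slope * s' / (2 * r)" .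
  moreover have "rate \<le> rate * profile slope s x"
    using profile_bounds(1)[of slope s x] slope_pos s assms(2) rate_pos by simp
  moreover have "(2 * L + c) / r = slope / r + c / r" by (simp add: slope_def add_divide_distrib)
  ultimately show ?thesis
    unfolding r_def[symmetric] s'_def[symmetric] using diffusion drift by linarith
qed

definition peak where "peak t = barrier 1 rate slope width delay 0 t"

lemma barrier_at_boundary: "barrier \<epsilon> rate slope width delay 0 t = \<epsilon> * peak t"
  by (simp add: peak_def barrier_def)

lemma peak_0: "peak 0 = 1"
  by (simp add: peak_def barrier_initial)

lemma peak_eq: "t \<ge> 0 \<Longrightarrow> peak t = exp (rate * t) * (1 + slope * sqrt (spread width delay t))"
  using width_pos delay_pos by (simp add: peak_def barrier_def profile_at_0 spread_nonneg)

lemma peak_bounds: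
  assumes "t \<ge> 0"
  shows "exp (rate * t) \<le> peak t" "peak t \<le> 2 * exp (rate * t)"
proof -
  have "0 \<le> spread width delay t" "spread width delay t \<le> width"
    using assms width_pos delay_pos by (auto simp: spread_nonneg spread_le)
  then have "0 \<le> slope * sqrt (spread width delay t)" "slope * sqrt (spread width delay t) \<le> 1"
    using slope_pos slope_sqrt_width mult_left_mono[of "sqrt (spread width delay t)" "sqrt width" slope]
    by auto
  then show "exp (rate * t) \<le> peak t" "peak t \<le> 2 * exp (rate * t)"
    using assms by (simp_all add: peak_eq)
qed

lemma peak_mono:
  assumes "0 \<le> t" "t \<le> t'"
  shows "peak t \<le> peak t'"
proof -
  have "sqrt (spread width delay t) \<le> sqrt (spread width delay t')"
    using assms width_pos delay_pos by (simp add: spread_mono)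
  then have "1 + slope * sqrt (spread width delay t) \<le> 1 + slope * sqrt (spread width delay t')"
    using slope_pos by simp
  moreover have "exp (rate * t) \<le> exp (rate * t')" using assms rate_pos by simp
  ultimately have "exp (rate * t) * (1 + slope * sqrt (spread width delay t))
      \<le> exp (rate * t') * (1 + slope * sqrt (spread width delay t'))"
    using slope_pos assms width_pos delay_pos by (intro mult_mono) (auto simp: spread_nonneg)
  then show ?thesis using assms by (simp add: peak_eq)
qed

lemma peak_attains:
  assumes "y \<ge> 1"
  obtains T where "T \<ge> 0" "peak T = y"
proof -
  define b where "b = ln y / rate"
  have "b \<ge> 0" using assms rate_pos by (simp add: b_def)
  have "y = exp (rate * b)" using assms rate_pos by (simp add: b_def)
  also have "\<dots> \<le> peak b" using \<open>b \<ge> 0\<close> by (rule peak_bounds)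
  finally have "y \<le> peak b" .
  have "continuous_on {0..b} peak"
  proof -
    have "continuous_on {0..b} (\<lambda>t. exp (rate * t) * (1 + slope * sqrt (width * t / (t + delay))))"
      using delay_pos by (intro continuous_intros) auto
    then show ?thesis
      by (rule continuous_on_eq) (simp add: peak_eq spread_def)
  qed
  then obtain T where "T \<in> {0..b}" "peak T = y"
    using IVT'[of peak 0 y b] \<open>b \<ge> 0\<close> \<open>y \<le> peak b\<close> assms peak_0 by auto
  then show ?thesis using that by auto
qed

lemma times_of_peak_levels_tendsto:
  assumes "eventually (\<lambda>k. 0 \<le> T k \<and> peak (T k) = real k) sequentially"
  shows "filterlim T at_top sequentially"
proof (rule filterlim_at_top_mono)
  show "filterlim (\<lambda>k. ln (real k / 2) / rate) at_top sequentially"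
    using rate_pos by real_asymp
  have "ln (real k / 2) / rate \<le> T k" if "k \<ge> 1" "0 \<le> T k" "peak (T k) = real k" for k
  proof -
    have "real k / 2 \<le> exp (rate * T k)" using peak_bounds(2)[OF that(2)] that(3) by simp
    then have "ln (real k / 2) \<le> ln (exp (rate * T k))"
      using that(1) by (subst ln_le_cancel_iff) auto
    then have "ln (real k / 2) \<le> rate * T k" by simp
    then show ?thesis using rate_pos by (simp add: divide_le_eq mult.commute)
  qed
  then show "eventually (\<lambda>k. ln (real k / 2) / rate \<le> T k) sequentially"
    using eventually_conj[OF assms eventually_ge_at_top[of 1]] by (auto elim!: eventually_mono)
qed

lemma boundary_inequality:
  assumes g: "\<And>y. y \<in> {0..1} \<Longrightarrow> - L * y \<le> g y"
    and "\<epsilon> > 0" "0 \<le> t" "t \<le> T" "\<epsilon> * peak T \<le> 1"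
  shows "- (\<epsilon> * exp (rate * t) * slope) \<le> g (\<epsilon> * peak t)"
proof -
  have "0 < peak t" using peak_bounds(1)[OF assms(3)] by (meson exp_gt_zero less_le_trans)
  then have "0 \<le> \<epsilon> * peak t" using assms(2) by simp
  moreover have "\<epsilon> * peak t \<le> \<epsilon> * peak T"
    using peak_mono[OF assms(3,4)] assms(2) by simp
  ultimately have "- L * (\<epsilon> * peak t) \<le> g (\<epsilon> * peak t)"
    using g assms(5) by simp
  moreover have "L * (\<epsilon> * peak t) \<le> L * (2 * (\<epsilon> * exp (rate * t)))"
    using peak_bounds(2)[OF assms(3)] assms(2) L_ge_1 by simp
  moreover have "L * (2 * (\<epsilon> * exp (rate * t))) = \<epsilon> * exp (rate * t) * slope"
    by (simp add: slope_def)
  ultimately show ?thesis by linarith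
qed

lemma barrier_super_solution:
  assumes g: "\<And>y. y \<in> {0..1} \<Longrightarrow> - L * y \<le> g y" and "\<epsilon> > 0" and "\<epsilon> * peak T \<le> 1"
  shows "super_solution c g (barrier \<epsilon> rate slope width delay) 0 T"
proof (rule super_solutionI[where
      u_x = "\<lambda>x t. \<epsilon> * exp (rate * t) * (slope * (x / sqrt (x\<^sup>2 + spread width delay t) - 1))"
  and u_xx = "\<lambda>x t. \<epsilon> * exp (rate * t) * (slope * (spread width delay t / sqrt (x\<^sup>2 + spread width delay t) ^ 3))"
  and u_t = "\<lambda>x t. \<epsilon> * exp (rate * t) * (rate * profile slope (spread width delay t) x
       + slope * (width * delay / (t + delay)\<^sup>2) / (2 * sqrt (x\<^sup>2 + spread width delay t)))"])
  show "continuous_on ({0..} \<times> {0..T}) (\<lambda>(x, t). barrier \<epsilon> rate slope width delay x t)"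
    using delay_pos by (rule barrier_continuous_on)
  fix t assume t: "t \<in> {0<..<T}"
  define A where "A = \<epsilon> * exp (rate * t)"
  have "A > 0" using \<open>\<epsilon> > 0\<close> by (simp add: A_def)
  have s: "spread width delay t > 0" using t width_pos delay_pos by (simp add: spread_pos)
  have u_x: "((\<lambda>z. barrier \<epsilon> rate slope width delay z t) has_real_derivative
      A * (slope * (x / sqrt (x\<^sup>2 + spread width delay t) - 1))) (at x)" for x
    unfolding barrier_def A_def[symmetric] by (intro DERIV_cmult profile_has_derivative_x s)
  then show "((\<lambda>z. barrier \<epsilon> rate slope width delay z t) has_real_derivative
      \<epsilon> * exp (rate * t) * (slope * (x / sqrt (x\<^sup>2 + spread width delay t) - 1))) (at x)" for x
    by (simp add: A_def)
  show "((\<lambda>z. barrier \<epsilon> rate slope width delay z t) has_real_derivative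
      \<epsilon> * exp (rate * t) * (slope * (0 / sqrt (0\<^sup>2 + spread width delay t) - 1))) (at 0 within {0..})"
    using u_x[of 0] by (simp add: A_def has_field_derivative_at_within)
  show "((\<lambda>z. \<epsilon> * exp (rate * t) * (slope * (z / sqrt (z\<^sup>2 + spread width delay t) - 1)))
      has_real_derivative \<epsilon> * exp (rate * t) * (slope * (spread width delay t / sqrt (x\<^sup>2 + spread width delay t) ^ 3))) (at x)" for x
    by (intro DERIV_cmult profile_has_second_derivative_x s)
  show "((\<lambda>\<tau>. barrier \<epsilon> rate slope width delay x \<tau>) has_real_derivative
      \<epsilon> * exp (rate * t) * (rate * profile slope (spread width delay t) x
       + slope * (width * delay / (t + delay)\<^sup>2) / (2 * sqrt (x\<^sup>2 + spread width delay t)))) (at t)" for x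
    using t delay_pos width_pos by (intro barrier_has_derivative_t) auto
  show "\<epsilon> * exp (rate * t) * (slope * (spread width delay t / sqrt (x\<^sup>2 + spread width delay t) ^ 3))
      - c * (\<epsilon> * exp (rate * t) * (slope * (x / sqrt (x\<^sup>2 + spread width delay t) - 1)))
    \<le> \<epsilon> * exp (rate * t) * (rate * profile slope (spread width delay t) x
       + slope * (width * delay / (t + delay)\<^sup>2) / (2 * sqrt (x\<^sup>2 + spread width delay t)))"
    if "x > 0" for x
    using mult_left_mono[OF interior_inequality[of t x] less_imp_le[OF \<open>A > 0\<close>]] t that
    by (simp add: A_def algebra_simps)
  show "\<epsilon> * exp (rate * t) * (slope * (0 / sqrt (0\<^sup>2 + spread width delay t) - 1))
      \<le> g (barrier \<epsilon> rate slope width delay 0 t)"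
    using boundary_inequality[OF g \<open>\<epsilon> > 0\<close> _ _ assms(3), of t] t
    by (simp add: barrier_at_boundary)
qed

end

theorem lemma18:
  fixes c :: real and g :: "real \<Rightarrow> real" and y1 :: real
  assumes "c \<ge> 0"
    and "C2_fun g"
    and "\<forall>y. g (y + 2 * pi) = g y"
    and "y1 > 0" and "g 0 = 0" and "g y1 = 0"
    and "\<forall>y. 0 < y \<and> y < y1 \<longrightarrow> g y < 0"
  shows "\<exists>(T :: nat \<Rightarrow> real) (u :: nat \<Rightarrow> real \<Rightarrow> real \<Rightarrow> real) (K :: nat).
           (\<forall>k\<ge>K. T k > 0 \<and> in_C_BUC (T k) (u k)
              \<and> (\<forall>x\<ge>0. u k x 0 = 1 / (real k)^2)
              \<and> super_solution c g (u k) 0 (T k)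
              \<and> u k 0 (T k) = 1 / real k)
           \<and> filterlim T at_top sequentially"
proof -
  obtain L where "L \<ge> 1" and g: "\<And>y. y \<in> {0..1} \<Longrightarrow> - L * y \<le> g y"
    using C2_fun_lower_linear_bound[OF assms(2,5)] by blast
  interpret barrier_constants L c
    using \<open>L \<ge> 1\<close> assms(1) by unfold_locales
  define T where "T k = (SOME T. 0 \<le> T \<and> peak T = real k)" for k :: nat
  define u where "u k = barrier (1 / (real k)\<^sup>2) rate slope width delay" for k :: nat
  have T: "0 \<le> T k \<and> peak (T k) = real k" if "k \<ge> 1" for k
    unfolding T_def by (rule someI_ex) (use peak_attains[of "real k"] that in auto)
  have "T k > 0 \<and> in_C_BUC (T k) (u k) \<and> (\<forall>x\<ge>0. u k x 0 = 1 / (real k)^2)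
      \<and> super_solution c g (u k) 0 (T k) \<and> u k 0 (T k) = 1 / real k" if "k \<ge> 2" for k
  proof -
    have peak_T: "1 / (real k)\<^sup>2 * peak (T k) = 1 / real k"
      using T[of k] that by (simp add: power2_eq_square)
    have "T k \<noteq> 0" using T[of k] that peak_0 by auto
    then show ?thesis
      using T[of k] that slope_pos width_pos delay_pos peak_T
      by (auto simp: u_def barrier_initial barrier_at_boundary
          intro!: barrier_in_C_BUC barrier_super_solution g)
  qed
  moreover have "filterlim T at_top sequentially"
    using T by (intro times_of_peak_levels_tendsto eventually_sequentiallyI) blast
  ultimately show ?thesis by blast
qed

end
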